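(* Let $r\in[0,\pi/2)$. Suppose that for all $i\ne j$ and all $t\ge 0$, $$\omega_{i}(t)-\omega_{j}(t)-[a_{ij}(t)+a_{ji}(t)]\sin r-\sum_{k\notin \Lambda_{ij}(t),\,k\ne i,j}\big([a_{ik}(t)]^{-}+[a_{jk}(t)]^{-}\big)\sin r-\sum_{k\in \Lambda_{ij}(t)}\min\{a_{ik}(t),a_{jk}(t)\}\sin r<0,$$ where $\Lambda_{ij}(t)=\{k:\ a_{ik}(t)>0\text{ and }a_{jk}(t)>0\}$ and $[z]^{-}=\min\{z,0\}$. Then the set $\mathscr A^{r}$ is invariant for system (TVKR).
   Context: Consider $m\ge 2$ phase oscillators $\theta=(\theta_1,\dots,\theta_m)\in\mathbb R^m$ governed by (TVKR): $\dot\theta_i=\omega_i(t)+\sum_{j=1}^m a_{ij}(t)\sin(\theta_j-\theta_i)$, $i=1,\dots,m$, where $\omega_i$ and $a_{ij}$ are real-valued, piecewise continuous, bounded functions of $t\ge 0$ with $a_{ii}\equiv 0$; the coupling coefficients $a_{ij}$ may take negative values. Write $\theta_{ij}=\theta_i-\theta_j$ for the phase differences (PDs). For $r\in[0,\pi/2)$, $\mathscr A^{r}=\{(\theta_{ij})_{i>j}\in\mathbb R^{m(m-1)/2}: |\theta_{ij}|\le r \text{ for all } i>j\}$. $\mathscr A^r$ is called invariant for (TVKR) if every solution whose phase differences lie in $\mathscr A^r$ at $t=0$ has phase differences in $\mathscr A^r$ for all $t\ge 0$. *)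

theory Defs
  imports "HOL-Analysis.Analysis"
begin

definition piecewise_continuous :: "(real \<Rightarrow> real) \<Rightarrow> bool" where
  "piecewise_continuous f \<longleftrightarrow>
     (\<forall>T. finite {t \<in> {0..T}. \<not> continuous (at t within {0..}) f}) \<and>
     (\<forall>t\<ge>0. \<exists>l. (f \<longlongrightarrow> l) (at_right t)) \<and>
     (\<forall>t>0. \<exists>l. (f \<longlongrightarrow> l) (at_left t))"

definition bounded_fun :: "(real \<Rightarrow> real) \<Rightarrow> bool" where
  "bounded_fun f \<longleftrightarrow> (\<exists>B. \<forall>t\<ge>0. \<bar>f t\<bar> \<le> B)"

definition admissible_TVKR ::
  "nat \<Rightarrow> (nat \<Rightarrow> real \<Rightarrow> real) \<Rightarrow> (nat \<Rightarrow> nat \<Rightarrow> real \<Rightarrow> real) \<Rightarrow> bool" where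
  "admissible_TVKR m \<omega> a \<longleftrightarrow>
     (\<forall>i<m. piecewise_continuous (\<omega> i) \<and> bounded_fun (\<omega> i)) \<and>
     (\<forall>i<m. \<forall>j<m. piecewise_continuous (a i j) \<and> bounded_fun (a i j)) \<and>
     (\<forall>i<m. \<forall>t\<ge>0. a i i t = 0)"

text \<open>A solution of (TVKR) on [0,\<infinity>): each phase is continuous on [0,\<infinity>) and satisfies
the ODE (one-sided derivative at 0) at every t \<ge> 0 outside a countable exceptional set
(allowing corners at the discontinuities of the coefficients).\<close>
definition TVKR_solution ::
  "nat \<Rightarrow> (nat \<Rightarrow> real \<Rightarrow> real) \<Rightarrow> (nat \<Rightarrow> nat \<Rightarrow> real \<Rightarrow> real) \<Rightarrow> (real \<Rightarrow> nat \<Rightarrow> real) \<Rightarrow> bool" where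
  "TVKR_solution m \<omega> a \<theta> \<longleftrightarrow>
     (\<forall>i<m. continuous_on {0..} (\<lambda>t. \<theta> t i)) \<and>
     (\<exists>S. countable S \<and>
        (\<forall>t\<in>{0..} - S. \<forall>i<m.
           ((\<lambda>s. \<theta> s i) has_real_derivative
              (\<omega> i t + (\<Sum>j<m. a i j t * sin (\<theta> t j - \<theta> t i)))) (at t within {0..})))"

definition in_A :: "nat \<Rightarrow> real \<Rightarrow> (nat \<Rightarrow> real) \<Rightarrow> bool" where
  "in_A m r x \<longleftrightarrow> (\<forall>i<m. \<forall>j<m. j < i \<longrightarrow> \<bar>x i - x j\<bar> \<le> r)"

definition invariant_A ::
  "nat \<Rightarrow> (nat \<Rightarrow> real \<Rightarrow> real) \<Rightarrow> (nat \<Rightarrow> nat \<Rightarrow> real \<Rightarrow> real) \<Rightarrow> real \<Rightarrow> bool" where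
  "invariant_A m \<omega> a r \<longleftrightarrow>
     (\<forall>\<theta>. TVKR_solution m \<omega> a \<theta> \<longrightarrow> in_A m r (\<theta> 0) \<longrightarrow> (\<forall>t\<ge>0. in_A m r (\<theta> t)))"

definition neg_part :: "real \<Rightarrow> real" where
  "neg_part z = min z 0"

definition Lambda :: "nat \<Rightarrow> (nat \<Rightarrow> nat \<Rightarrow> real \<Rightarrow> real) \<Rightarrow> nat \<Rightarrow> nat \<Rightarrow> real \<Rightarrow> nat set" where
  "Lambda m a i j t = {k. k < m \<and> a i k t > 0 \<and> a j k t > 0}"

end

theory Submission
  imports Defs
begin

text \<open>Suppose all phase differences are at most \<open>c \<in> (r, \<pi>/2)\<close> and the pair \<open>i, j\<close>
  attains \<open>\<theta>\<^sub>i - \<theta>\<^sub>j = c\<close>. Then every phase lies between \<open>\<theta>\<^sub>j\<close> and \<open>\<theta>\<^sub>i\<close>, so by the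
  subadditivity of \<open>sin\<close> on \<open>[0, \<pi>/2]\<close> the coupling terms decrease \<open>\<theta>\<^sub>i - \<theta>\<^sub>j\<close> at rate at
  least \<open>K\<^sub>i\<^sub>j sin c\<close>, which beats the frequency gap by the hypothesis. Hence the largest
  phase difference can cross a level \<open>c\<close> only at one of the countably many times where the
  equation is allowed to fail; as there are uncountably many levels in \<open>(r, \<pi>/2)\<close>, it never
  exceeds \<open>r\<close>.\<close>

lemma sin_le_sin_diff_add_sin:
  fixes c y :: real
  assumes "0 \<le> y" "y \<le> c" "c \<le> pi/2"
  shows "sin c \<le> sin (c - y) + sin y"
proof -
  have "0 \<le> sin (c - y)" "0 \<le> sin y" using assms by (auto intro: sin_ge_zero)
  then have "sin (c - y) * cos y + cos (c - y) * sin y \<le> sin (c - y) * 1 + 1 * sin y"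
    by (intro add_mono mult_left_mono mult_right_mono) auto
  then show ?thesis using sin_add[of "c - y" y] by simp
qed

lemma min_mult_sin_le:
  fixes \<alpha> \<beta> c y :: real
  assumes "0 < \<alpha>" "0 < \<beta>" "0 \<le> y" "y \<le> c" "c \<le> pi/2"
  shows "min \<alpha> \<beta> * sin c \<le> \<alpha> * sin (c - y) + \<beta> * sin y"
proof -
  have "0 \<le> sin (c - y)" "0 \<le> sin y" using assms by (auto intro: sin_ge_zero)
  have "min \<alpha> \<beta> * sin c \<le> min \<alpha> \<beta> * (sin (c - y) + sin y)"
    using assms sin_le_sin_diff_add_sin[of y c] by (intro mult_left_mono) auto
  also have "\<dots> \<le> \<alpha> * sin (c - y) + \<beta> * sin y"
    using \<open>0 \<le> sin (c - y)\<close> \<open>0 \<le> sin y\<close>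
    by (simp add: distrib_left add_mono mult_right_mono)
  finally show ?thesis .
qed

lemma neg_part_mult_sin_le:
  fixes \<alpha> y c :: real
  assumes "0 \<le> y" "y \<le> c" "c \<le> pi/2"
  shows "neg_part \<alpha> * sin c \<le> \<alpha> * sin y"
proof -
  have "0 \<le> sin y" "sin y \<le> sin c" using assms by (auto intro: sin_ge_zero sin_monotone_2pi_le)
  then have "neg_part \<alpha> * sin c \<le> neg_part \<alpha> * sin y"
    by (intro mult_left_mono_neg) (auto simp: neg_part_def)
  also have "\<dots> \<le> \<alpha> * sin y"
    using \<open>0 \<le> sin y\<close> by (intro mult_right_mono) (auto simp: neg_part_def)
  finally show ?thesis .
qed

text \<open>The hypothesis of the theorem reads
  \<open>\<omega>\<^sub>i t - \<omega>\<^sub>j t < effective_coupling m a i j t * sin r\<close>.\<close>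
definition effective_coupling ::
  "nat \<Rightarrow> (nat \<Rightarrow> nat \<Rightarrow> real \<Rightarrow> real) \<Rightarrow> nat \<Rightarrow> nat \<Rightarrow> real \<Rightarrow> real" where
  "effective_coupling m a i j t =
     a i j t + a j i t
     + (\<Sum>k\<in>{k. k < m \<and> k \<notin> Lambda m a i j t \<and> k \<noteq> i \<and> k \<noteq> j}.
          neg_part (a i k t) + neg_part (a j k t))
     + (\<Sum>k\<in>Lambda m a i j t. min (a i k t) (a j k t))"

lemma effective_coupling_commute:
  "effective_coupling m a i j t = effective_coupling m a j i t"
proof -
  have "Lambda m a i j t = Lambda m a j i t" by (auto simp: Lambda_def)
  moreover have "{k. k < m \<and> k \<notin> Lambda m a i j t \<and> k \<noteq> i \<and> k \<noteq> j}
      = {k. k < m \<and> k \<notin> Lambda m a j i t \<and> k \<noteq> j \<and> k \<noteq> i}"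
    using calculation by auto
  ultimately show ?thesis
    unfolding effective_coupling_def by (simp add: add.commute min.commute add.left_commute)
qed

lemma coupling_drift_le:
  fixes x :: "nat \<Rightarrow> real"
  assumes ij: "i < m" "j < m" "i \<noteq> j" and aii: "a i i t = 0" "a j j t = 0"
    and c: "x i - x j = c" "c \<le> pi/2" and between: "\<forall>k<m. x j \<le> x k \<and> x k \<le> x i"
  shows "(\<Sum>k<m. a i k t * sin (x k - x i)) - (\<Sum>k<m. a j k t * sin (x k - x j))
           \<le> - effective_coupling m a i j t * sin c"
proof -
  define L where "L = Lambda m a i j t"
  define R where "R = {k. k < m \<and> k \<notin> L \<and> k \<noteq> i \<and> k \<noteq> j}"
  define g where "g k = a i k t * sin (x k - x i) - a j k t * sin (x k - x j)" for k
  have g_eq: "g k = - (a i k t * sin (c - (x k - x j)) + a j k t * sin (x k - x j))" for k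
  proof -
    have "x k - x i = - (c - (x k - x j))" using c by simp
    then have "sin (x k - x i) = - sin (c - (x k - x j))" by (simp only: sin_minus)
    then show ?thesis unfolding g_def by simp
  qed
  have y: "0 \<le> x k - x j" "x k - x j \<le> c" "0 \<le> c - (x k - x j)" "c - (x k - x j) \<le> c"
    if "k < m" for k
    using between that c by auto
  have "{..<m} = {i, j} \<union> (L \<union> R)" "{i, j} \<inter> (L \<union> R) = {}" "L \<inter> R = {}"
    using ij aii by (auto simp: L_def R_def Lambda_def)
  then have sum_g: "(\<Sum>k<m. g k) = g i + g j + (\<Sum>k\<in>L. g k) + (\<Sum>k\<in>R. g k)"
    using ij by (simp add: sum.union_disjoint L_def R_def Lambda_def)
  have "x j - x i = - c" using c by simp
  then have "g i + g j = - (a i j t + a j i t) * sin c"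
    using aii c unfolding g_def by (simp add: algebra_simps)
  moreover have "(\<Sum>k\<in>L. g k) \<le> (\<Sum>k\<in>L. - min (a i k t) (a j k t) * sin c)"
  proof (intro sum_mono)
    fix k assume "k \<in> L"
    then have "k < m" "0 < a i k t" "0 < a j k t" by (auto simp: L_def Lambda_def)
    then show "g k \<le> - min (a i k t) (a j k t) * sin c"
      using min_mult_sin_le[of "a i k t" "a j k t" "x k - x j" c] y c g_eq[of k] by simp
  qed
  moreover have "(\<Sum>k\<in>R. g k) \<le> (\<Sum>k\<in>R. - (neg_part (a i k t) + neg_part (a j k t)) * sin c)"
  proof (intro sum_mono)
    fix k assume "k \<in> R"
    then have "k < m" by (simp add: R_def)
    then show "g k \<le> - (neg_part (a i k t) + neg_part (a j k t)) * sin c"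
      using neg_part_mult_sin_le[of "c - (x k - x j)" c "a i k t"]
        neg_part_mult_sin_le[of "x k - x j" c "a j k t"] y c g_eq[of k]
      by (simp add: algebra_simps)
  qed
  moreover have "(\<Sum>k\<in>L. - min (a i k t) (a j k t) * sin c)
      = - (\<Sum>k\<in>L. min (a i k t) (a j k t)) * sin c"
    "(\<Sum>k\<in>R. - (neg_part (a i k t) + neg_part (a j k t)) * sin c)
      = - (\<Sum>k\<in>R. neg_part (a i k t) + neg_part (a j k t)) * sin c"
    by (simp_all only: sum_distrib_right sum_negf mult_minus_left)
  ultimately have "(\<Sum>k<m. g k) \<le> - effective_coupling m a i j t * sin c"
    unfolding sum_g effective_coupling_def L_def[symmetric] R_def[symmetric]
    by (simp add: algebra_simps)
  then show ?thesis by (simp add: g_def sum_subtractf)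
qed

lemma abs_less_mult_imp_less_mult:
  fixes d K s s' :: real
  assumes "\<bar>d\<bar> < K * s" "0 \<le> s" "s \<le> s'"
  shows "d < K * s'"
proof -
  have "0 < K * s" using assms(1) by linarith
  with assms(2) have "0 < K" by (simp add: zero_less_mult_iff)
  then have "K * s \<le> K * s'" using assms(3) by (simp add: mult_left_mono)
  with assms(1) show ?thesis by linarith
qed

lemma DERIV_neg_imp_eventually_less_right:
  fixes f :: "real \<Rightarrow> real"
  assumes "(f has_real_derivative l) (at t within {0..})" "l < 0" "0 \<le> t"
  shows "eventually (\<lambda>s. f s < f t) (at_right t)"
proof -
  have "(f has_real_derivative l) (at t within {t<..})"
    using assms(1) by (rule has_field_derivative_subset) (use assms(3) in auto)
  then have "((\<lambda>s. (f s - f t) / (s - t)) \<longlongrightarrow> l) (at_right t)"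
    by (simp add: has_field_derivative_iff)
  then have "eventually (\<lambda>s. (f s - f t) / (s - t) < 0) (at_right t)"
    using assms(2) by (rule order_tendstoD(2))
  then show ?thesis using eventually_at_right_less[of t]
    by eventually_elim (auto simp: divide_less_0_iff)
qed

lemma continuous_on_imp_eventually_less_right:
  fixes f :: "real \<Rightarrow> real"
  assumes "continuous_on {0..} f" "0 \<le> t" "f t < c"
  shows "eventually (\<lambda>s. f s < c) (at_right t)"
proof -
  have "(f \<longlongrightarrow> f t) (at t within {0..})"
    using assms by (simp add: continuous_on_def)
  then have "(f \<longlongrightarrow> f t) (at_right t)"
    by (rule tendsto_within_subset) (use assms(2) in auto)
  then show ?thesis using assms(3) by (rule order_tendstoD(2))
qed

lemma last_time_below:
  fixes D :: "'p \<Rightarrow> real \<Rightarrow> real"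
  assumes fin: "finite P" and cont: "\<forall>p\<in>P. continuous_on {0..} (D p)"
    and init: "\<forall>p\<in>P. D p 0 \<le> c" and "0 \<le> T" and "p0 \<in> P" "c < D p0 T"
  obtains t where "0 \<le> t" "t < T" "\<forall>p\<in>P. D p t \<le> c" "\<exists>p\<in>P. D p t = c"
    "\<not> eventually (\<lambda>s. \<forall>p\<in>P. D p s \<le> c) (at_right t)"
proof -
  define M where "M = {t\<in>{0..T}. \<forall>p\<in>P. D p t \<le> c}"
  define t where "t = Sup M"
  have "closed ({0..T} \<inter> D p -` {..c})" if "p \<in> P" for p
    using cont that by (intro continuous_closed_preimage) (auto intro: continuous_on_subset)
  moreover have "M = {0..T} \<inter> (\<Inter>p\<in>P. {0..T} \<inter> D p -` {..c})"
    unfolding M_def using \<open>p0 \<in> P\<close> by auto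
  ultimately have "closed M" by (metis closed_INT closed_Int closed_atLeastAtMost)
  moreover have "0 \<in> M" using init \<open>0 \<le> T\<close> unfolding M_def by simp
  moreover have bdd: "bdd_above M" unfolding M_def by (auto intro: bdd_aboveI[of _ T])
  ultimately have "t \<in> M" unfolding t_def by (intro closed_contains_Sup) auto
  moreover have "T \<notin> M" using \<open>p0 \<in> P\<close> \<open>c < D p0 T\<close> unfolding M_def by force
  ultimately have t: "0 \<le> t" "t < T" "\<forall>p\<in>P. D p t \<le> c"
    unfolding M_def by (auto simp: order.order_iff_strict)
  have no_ev: "\<not> eventually (\<lambda>s. \<forall>p\<in>P. D p s \<le> c) (at_right t)"
  proof
    assume "eventually (\<lambda>s. \<forall>p\<in>P. D p s \<le> c) (at_right t)"
    moreover have "eventually (\<lambda>s. t < s \<and> s < T) (at_right t)"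
      using \<open>t < T\<close> by (auto simp: eventually_at_right_field)
    ultimately have "eventually (\<lambda>s. (\<forall>p\<in>P. D p s \<le> c) \<and> t < s \<and> s < T) (at_right t)"
      by (rule eventually_conj)
    then obtain s where "\<forall>p\<in>P. D p s \<le> c" "t < s" "s < T"
      using eventually_happens'[OF trivial_limit_at_right_real] by blast
    then have "s \<in> M" using \<open>0 \<le> t\<close> unfolding M_def by auto
    then show False using cSup_upper[OF _ bdd] \<open>t < s\<close> unfolding t_def by fastforce
  qed
  have "\<exists>p\<in>P. D p t = c"
  proof (rule ccontr)
    assume "\<not> (\<exists>p\<in>P. D p t = c)"
    then have "\<forall>p\<in>P. eventually (\<lambda>s. D p s < c) (at_right t)"
      using t cont by (force intro: continuous_on_imp_eventually_less_right)
    then have "eventually (\<lambda>s. \<forall>p\<in>P. D p s < c) (at_right t)"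
      using fin by (simp add: eventually_ball_finite)
    then have "eventually (\<lambda>s. \<forall>p\<in>P. D p s \<le> c) (at_right t)"
      by (rule eventually_mono) auto
    then show False using no_ev by contradiction
  qed
  with t no_ev show ?thesis using that by blast
qed

lemma continuous_family_le_barrier:
  fixes D :: "'p \<Rightarrow> real \<Rightarrow> real"
  assumes fin: "finite P" and cont: "\<forall>p\<in>P. continuous_on {0..} (D p)"
    and init: "\<forall>p\<in>P. D p 0 \<le> r" and "r < b" and "countable S"
    and stays: "\<And>t c. 0 \<le> t \<Longrightarrow> t \<notin> S \<Longrightarrow> r < c \<Longrightarrow> c < b \<Longrightarrow> \<forall>p\<in>P. D p t \<le> c
              \<Longrightarrow> eventually (\<lambda>s. \<forall>p\<in>P. D p s \<le> c) (at_right t)"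
    and "0 \<le> T" and "p0 \<in> P"
  shows "D p0 T \<le> r"
proof (rule ccontr)
  assume "\<not> D p0 T \<le> r"
  define b' where "b' = min (D p0 T) b"
  have "\<forall>c\<in>{r<..<b'}. \<exists>t. t \<in> S \<and> (\<forall>p\<in>P. D p t \<le> c) \<and> (\<exists>p\<in>P. D p t = c)"
  proof
    fix c assume c: "c \<in> {r<..<b'}"
    then have "\<forall>p\<in>P. D p 0 \<le> c" "c < D p0 T" using init by (auto simp: b'_def)
    then obtain t where "0 \<le> t" "t < T" "\<forall>p\<in>P. D p t \<le> c" "\<exists>p\<in>P. D p t = c"
        "\<not> eventually (\<lambda>s. \<forall>p\<in>P. D p s \<le> c) (at_right t)"
      by (rule last_time_below[OF fin cont _ \<open>0 \<le> T\<close> \<open>p0 \<in> P\<close>])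
    moreover have "t \<in> S" using stays c calculation by (force simp: b'_def)
    ultimately show "\<exists>t. t \<in> S \<and> (\<forall>p\<in>P. D p t \<le> c) \<and> (\<exists>p\<in>P. D p t = c)" by blast
  qed
  then obtain tc where tc: "\<And>c. c \<in> {r<..<b'} \<Longrightarrow>
      tc c \<in> S \<and> (\<forall>p\<in>P. D p (tc c) \<le> c) \<and> (\<exists>p\<in>P. D p (tc c) = c)"
    by metis
  have "inj_on tc {r<..<b'}"
  proof (rule inj_onI)
    fix c1 c2 assume "c1 \<in> {r<..<b'}" "c2 \<in> {r<..<b'}" "tc c1 = tc c2"
    with tc[of c1] tc[of c2] have "c1 \<le> c2" "c2 \<le> c1" by metis+
    then show "c1 = c2" by simp
  qed
  moreover have "countable (tc ` {r<..<b'})"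
    using tc \<open>countable S\<close> by (blast intro: countable_subset)
  ultimately have "countable {r<..<b'}" by (rule countable_image_inj_on[rotated])
  moreover have "r < b'" using \<open>\<not> D p0 T \<le> r\<close> \<open>r < b\<close> by (simp add: b'_def)
  ultimately show False using uncountable_open_interval by blast
qed

lemma TVKR_phase_difference_eventually_less:
  fixes \<theta> :: "real \<Rightarrow> nat \<Rightarrow> real"
  assumes cont: "\<forall>i<m. continuous_on {0..} (\<lambda>s. \<theta> s i)"
    and der: "\<forall>i<m. ((\<lambda>s. \<theta> s i) has_real_derivative
                (\<omega> i t + (\<Sum>k<m. a i k t * sin (\<theta> t k - \<theta> t i)))) (at t within {0..})"
    and aii: "\<forall>i<m. a i i t = 0"
    and gap: "\<forall>i<m. \<forall>j<m. i \<noteq> j \<longrightarrow> \<bar>\<omega> i t - \<omega> j t\<bar> < effective_coupling m a i j t * sin r"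
    and "0 \<le> t" "0 \<le> r" "r < c" "c < pi/2"
    and below: "\<forall>i<m. \<forall>j<m. \<theta> t i - \<theta> t j \<le> c"
    and ij: "i < m" "j < m"
  shows "eventually (\<lambda>s. \<theta> s i - \<theta> s j < c) (at_right t)"
proof (cases "\<theta> t i - \<theta> t j < c")
  case True
  have "continuous_on {0..} (\<lambda>s. \<theta> s i - \<theta> s j)"
    using cont ij by (intro continuous_on_diff) auto
  then show ?thesis using \<open>0 \<le> t\<close> True by (rule continuous_on_imp_eventually_less_right)
next
  case False
  with below ij have boundary: "\<theta> t i - \<theta> t j = c" by force
  then have "i \<noteq> j" using \<open>0 \<le> r\<close> \<open>r < c\<close> by auto
  have between: "\<forall>k<m. \<theta> t j \<le> \<theta> t k \<and> \<theta> t k \<le> \<theta> t i"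
    using below ij boundary by force
  have "\<bar>\<omega> i t - \<omega> j t\<bar> < effective_coupling m a i j t * sin r"
    using gap ij \<open>i \<noteq> j\<close> by blast
  moreover have "0 \<le> sin r" "sin r \<le> sin c"
    using \<open>0 \<le> r\<close> \<open>r < c\<close> \<open>c < pi/2\<close> by (auto intro: sin_ge_zero sin_monotone_2pi_le)
  ultimately have "\<omega> i t - \<omega> j t < effective_coupling m a i j t * sin c"
    by (rule abs_less_mult_imp_less_mult)
  moreover have "(\<Sum>k<m. a i k t * sin (\<theta> t k - \<theta> t i)) - (\<Sum>k<m. a j k t * sin (\<theta> t k - \<theta> t j))
      \<le> - effective_coupling m a i j t * sin c"
    using ij \<open>i \<noteq> j\<close> aii boundary between \<open>c < pi/2\<close> by (intro coupling_drift_le) auto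
  moreover have "((\<lambda>s. \<theta> s i - \<theta> s j) has_real_derivative
      (\<omega> i t + (\<Sum>k<m. a i k t * sin (\<theta> t k - \<theta> t i)))
      - (\<omega> j t + (\<Sum>k<m. a j k t * sin (\<theta> t k - \<theta> t j)))) (at t within {0..})"
    using der ij by (intro DERIV_diff) auto
  ultimately have "eventually (\<lambda>s. \<theta> s i - \<theta> s j < \<theta> t i - \<theta> t j) (at_right t)"
    using \<open>0 \<le> t\<close> by (intro DERIV_neg_imp_eventually_less_right) auto
  then show ?thesis using boundary by simp
qed

lemma TVKR_phase_differences_eventually_le:
  fixes \<theta> :: "real \<Rightarrow> nat \<Rightarrow> real"
  assumes "\<forall>i<m. continuous_on {0..} (\<lambda>s. \<theta> s i)"
    and "\<forall>i<m. ((\<lambda>s. \<theta> s i) has_real_derivative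
                (\<omega> i t + (\<Sum>k<m. a i k t * sin (\<theta> t k - \<theta> t i)))) (at t within {0..})"
    and "\<forall>i<m. a i i t = 0"
    and "\<forall>i<m. \<forall>j<m. i \<noteq> j \<longrightarrow> \<bar>\<omega> i t - \<omega> j t\<bar> < effective_coupling m a i j t * sin r"
    and "0 \<le> t" "0 \<le> r" "r < c" "c < pi/2"
    and "\<forall>i<m. \<forall>j<m. \<theta> t i - \<theta> t j \<le> c"
  shows "eventually (\<lambda>s. \<forall>p\<in>{..<m} \<times> {..<m}. \<theta> s (fst p) - \<theta> s (snd p) \<le> c) (at_right t)"
proof -
  have "\<forall>p\<in>{..<m} \<times> {..<m}. eventually (\<lambda>s. \<theta> s (fst p) - \<theta> s (snd p) < c) (at_right t)"
    using TVKR_phase_difference_eventually_less[where \<theta> = \<theta> and \<omega> = \<omega>, OF assms] by auto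
  then have "eventually (\<lambda>s. \<forall>p\<in>{..<m} \<times> {..<m}. \<theta> s (fst p) - \<theta> s (snd p) < c) (at_right t)"
    by (intro eventually_ball_finite) auto
  then show ?thesis by (rule eventually_mono) (meson less_imp_le)
qed

text \<open>Both orientations of the hypothesis are used: together they force the coupling to be
  positive, so that the bound at level \<open>r\<close> transfers to every level \<open>c > r\<close>, even for \<open>r = 0\<close>.\<close>
lemma frequency_gap_less_effective_coupling:
  assumes "\<forall>i<m. \<forall>j<m. i \<noteq> j \<longrightarrow> (\<forall>t\<ge>0.
           \<omega> i t - \<omega> j t - (a i j t + a j i t) * sin r
           - (\<Sum>k\<in>{k. k < m \<and> k \<notin> Lambda m a i j t \<and> k \<noteq> i \<and> k \<noteq> j}.
                (neg_part (a i k t) + neg_part (a j k t))) * sin r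
           - (\<Sum>k\<in>Lambda m a i j t. min (a i k t) (a j k t)) * sin r < 0)"
    and "0 \<le> t"
  shows "\<forall>i<m. \<forall>j<m. i \<noteq> j \<longrightarrow> \<bar>\<omega> i t - \<omega> j t\<bar> < effective_coupling m a i j t * sin r"
proof -
  have "\<omega> i t - \<omega> j t < effective_coupling m a i j t * sin r" if "i < m" "j < m" "i \<noteq> j" for i j
    using assms that unfolding effective_coupling_def by (simp add: algebra_simps)
  then show ?thesis by (metis abs_less_iff effective_coupling_commute minus_diff_eq)
qed

lemma in_A_iff_diff_le:
  assumes "0 \<le> r"
  shows "in_A m r x \<longleftrightarrow> (\<forall>i<m. \<forall>j<m. x i - x j \<le> r)"
proof
  assume A: "in_A m r x"
  show "\<forall>i<m. \<forall>j<m. x i - x j \<le> r"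
  proof (intro allI impI)
    fix i j assume "i < m" "j < m"
    then consider "j < i" "\<bar>x i - x j\<bar> \<le> r" | "i < j" "\<bar>x j - x i\<bar> \<le> r" | "i = j"
      using A unfolding in_A_def by (metis linorder_neqE_nat)
    then show "x i - x j \<le> r" by cases (use assms in auto)
  qed
qed (auto simp: in_A_def abs_le_iff)

theorem lemma1:
  fixes m :: nat and \<omega> :: "nat \<Rightarrow> real \<Rightarrow> real" and a :: "nat \<Rightarrow> nat \<Rightarrow> real \<Rightarrow> real"
    and r :: real
  assumes "m \<ge> 2"
    and "admissible_TVKR m \<omega> a"
    and "0 \<le> r" and "r < pi / 2"
    and "\<forall>i<m. \<forall>j<m. i \<noteq> j \<longrightarrow> (\<forall>t\<ge>0.
           \<omega> i t - \<omega> j t - (a i j t + a j i t) * sin r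
           - (\<Sum>k\<in>{k. k < m \<and> k \<notin> Lambda m a i j t \<and> k \<noteq> i \<and> k \<noteq> j}.
                (neg_part (a i k t) + neg_part (a j k t))) * sin r
           - (\<Sum>k\<in>Lambda m a i j t. min (a i k t) (a j k t)) * sin r < 0)"
  shows "invariant_A m \<omega> a r"
  unfolding invariant_A_def
proof (intro allI impI)
  fix \<theta> and T :: real
  assume "TVKR_solution m \<omega> a \<theta>" "in_A m r (\<theta> 0)" "0 \<le> T"
  then obtain S where cont: "\<forall>i<m. continuous_on {0..} (\<lambda>s. \<theta> s i)" and "countable S"
    and der: "\<forall>t\<in>{0..} - S. \<forall>i<m. ((\<lambda>s. \<theta> s i) has_real_derivative
                (\<omega> i t + (\<Sum>j<m. a i j t * sin (\<theta> t j - \<theta> t i)))) (at t within {0..})"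
    unfolding TVKR_solution_def by blast
  have aii: "\<forall>i<m. a i i t = 0" if "0 \<le> t" for t
    using assms(2) that unfolding admissible_TVKR_def by blast
  have gap: "\<forall>i<m. \<forall>j<m. i \<noteq> j \<longrightarrow> \<bar>\<omega> i t - \<omega> j t\<bar> < effective_coupling m a i j t * sin r"
    if "0 \<le> t" for t
    using frequency_gap_less_effective_coupling[OF assms(5) that] .
  define D where "D p t = \<theta> t (fst p) - \<theta> t (snd p)" for p :: "nat \<times> nat" and t
  have "D p T \<le> r" if "p \<in> {..<m} \<times> {..<m}" for p
  proof (rule continuous_family_le_barrier[OF _ _ _ \<open>r < pi/2\<close> \<open>countable S\<close> _ \<open>0 \<le> T\<close> that])
    fix t c assume t: "0 \<le> t" "t \<notin> S" and c: "r < c" "c < pi/2"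
      and "\<forall>p\<in>{..<m} \<times> {..<m}. D p t \<le> c"
    then have "\<forall>i<m. \<forall>j<m. \<theta> t i - \<theta> t j \<le> c" by (auto simp: D_def)
    moreover have "\<forall>i<m. ((\<lambda>s. \<theta> s i) has_real_derivative
        (\<omega> i t + (\<Sum>k<m. a i k t * sin (\<theta> t k - \<theta> t i)))) (at t within {0..})"
      using der t by blast
    ultimately show "eventually (\<lambda>s. \<forall>p\<in>{..<m} \<times> {..<m}. D p s \<le> c) (at_right t)"
      unfolding D_def using cont aii gap t(1) \<open>0 \<le> r\<close> c
      by (intro TVKR_phase_differences_eventually_le) auto
  qed (use cont \<open>in_A m r (\<theta> 0)\<close> in_A_iff_diff_le[OF \<open>0 \<le> r\<close>] in
       \<open>auto simp: D_def intro: continuous_on_diff\<close>)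
  then show "in_A m r (\<theta> T)"
    using in_A_iff_diff_le[OF \<open>0 \<le> r\<close>] by (auto simp: D_def)
qed

end
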